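(* Let $n\in\{6,10,12\}$ and $V_0=\{v\in\{-1,1\}^n : v_1=1,\ \sum_i v_i=0\}$. Then there exist signs $\varepsilon_v\in\{-1,1\}$, $v\in V_0$, such that $\sum_{v\in V_0}\varepsilon_v v=0$. *)

theory Defs
  imports Main
begin

text \<open>Vectors in {-1,1}^n are represented as functions nat => int on the index
set {0..<n} (coordinate i+1 of the paper is value at i), extended by 0 outside.\<close>

definition sign_vectors :: "nat \<Rightarrow> (nat \<Rightarrow> int) set" where
  "sign_vectors n = {v. (\<forall>i<n. v i = 1 \<or> v i = -1) \<and> (\<forall>i\<ge>n. v i = 0)}"

definition V0 :: "nat \<Rightarrow> (nat \<Rightarrow> int) set" where
  "V0 n = {v \<in> sign_vectors n. v 0 = 1 \<and> (\<Sum>i<n. v i) = 0}"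

end

theory Submission
  imports Defs
begin

text \<open>The signs depend only on the sum of the (0-based) positions of the \<open>+1\<close> entries of \<open>v\<close>,
taken modulo the length \<open>m\<close> of a sign pattern \<open>f\<close>; patterns with \<open>m = 6, 10, 22\<close> for
\<open>n = 6, 10, 12\<close> were found by computer search. Enumerating \<open>V0 n\<close> as a list of \<open>\<plusminus>1\<close>-lists
turns the balancing condition into a finite computation, decided by evaluation.\<close>

fun sign_lists :: "nat \<Rightarrow> nat \<Rightarrow> int list list" where
  "sign_lists 0 k = (if k = 0 then [[]] else [])"
| "sign_lists (Suc m) k =
     (if k = 0 then [] else map (Cons 1) (sign_lists m (k - 1))) @ map (Cons (-1)) (sign_lists m k)"

lemma set_sign_lists:
  "xs \<in> set (sign_lists m k) \<longleftrightarrow> length xs = m \<and> set xs \<subseteq> {1, -1} \<and> count_list xs 1 = k"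
proof (induction m arbitrary: k xs)
  case 0
  then show ?case by auto
next
  case (Suc m)
  then show ?case
    by (cases xs; cases k) auto
qed

lemma distinct_sign_lists: "distinct (sign_lists m k)"
  by (induction m arbitrary: k) (auto simp: distinct_map)

lemma sum_list_sign_list:
  "set xs \<subseteq> {1, -1} \<Longrightarrow> sum_list xs = 2 * int (count_list xs 1) - int (length xs)"
  by (induction xs) auto

definition vec_of_list :: "int list \<Rightarrow> nat \<Rightarrow> int" where
  "vec_of_list xs i = (if i < length xs then xs ! i else 0)"

lemma inj_on_vec_of_list: "inj_on vec_of_list {xs. length xs = n}"
proof (rule inj_onI)
  fix xs ys assume "xs \<in> {xs. length xs = n}" "ys \<in> {xs. length xs = n}"
    and "vec_of_list xs = vec_of_list ys"
  then show "xs = ys"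
    by (metis (mono_tags) mem_Collect_eq nth_equalityI vec_of_list_def)
qed

lemma sum_vec_of_list: "(\<Sum>i<length xs. vec_of_list xs i) = sum_list xs"
  by (simp add: vec_of_list_def sum_list_sum_nth atLeast0LessThan)

lemma sign_vectors_eq_image:
  "sign_vectors n = vec_of_list ` {xs. length xs = n \<and> set xs \<subseteq> {1, -1}}"
proof (intro equalityI subsetI)
  fix v assume v: "v \<in> sign_vectors n"
  have "v = vec_of_list (map v [0..<n])"
    using v by (auto simp: vec_of_list_def sign_vectors_def)
  moreover have "set (map v [0..<n]) \<subseteq> {1, -1}"
    using v by (auto simp: sign_vectors_def)
  ultimately show "v \<in> vec_of_list ` {xs. length xs = n \<and> set xs \<subseteq> {1, -1}}"
    by force
next
  fix v assume "v \<in> vec_of_list ` {xs. length xs = n \<and> set xs \<subseteq> {1, -1}}"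
  then obtain xs where "length xs = n" "set xs \<subseteq> {1, -1}" "v = vec_of_list xs"
    by blast
  then show "v \<in> sign_vectors n"
    by (auto simp: sign_vectors_def vec_of_list_def dest: subsetD[OF _ nth_mem])
qed

definition V0_list :: "nat \<Rightarrow> int list list" where
  "V0_list n = map (Cons 1) (sign_lists (n - 1) (n div 2 - 1))"

lemma sum_list_Cons_one_eq_0_iff:
  fixes ys :: "int list"
  assumes "even n" "0 < n" "length ys = n - 1" "set ys \<subseteq> {1, -1}"
  shows "sum_list (1 # ys) = 0 \<longleftrightarrow> count_list ys 1 = n div 2 - 1"
  using assms sum_list_sign_list[of ys] by (auto elim!: evenE)

lemma V0_eq_image_V0_list:
  assumes "even n" "0 < n"
  shows "V0 n = vec_of_list ` set (V0_list n)"
proof -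
  have "V0 n = vec_of_list ` {xs. length xs = n \<and> set xs \<subseteq> {1, -1} \<and> xs ! 0 = 1 \<and> sum_list xs = 0}"
    unfolding V0_def sign_vectors_eq_image
    using assms sum_vec_of_list by (force simp: vec_of_list_def)
  also have "{xs. length xs = n \<and> set xs \<subseteq> {1, -1} \<and> xs ! 0 = 1 \<and> sum_list xs = 0}
      = Cons 1 ` {ys. length ys = n - 1 \<and> set ys \<subseteq> {1, -1} \<and> sum_list (1 # ys) = 0}"
    using assms by (auto simp: length_Suc_conv image_def gr0_conv_Suc)
  also have "{ys. length ys = n - 1 \<and> set ys \<subseteq> {1, -1} \<and> sum_list (1 # ys) = 0}
      = set (sign_lists (n - 1) (n div 2 - 1))"
    using sum_list_Cons_one_eq_0_iff[OF assms] by (auto simp: set_sign_lists)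
  finally show ?thesis by (simp add: V0_list_def image_image)
qed

lemma sum_V0_eq_sum_list:
  assumes "even n" "0 < n"
  shows "(\<Sum>v\<in>V0 n. g v) = (\<Sum>xs\<leftarrow>V0_list n. g (vec_of_list xs))"
proof -
  have "inj_on vec_of_list (set (V0_list n))"
    by (rule inj_on_subset[OF inj_on_vec_of_list])
      (use assms in \<open>auto simp: V0_list_def set_sign_lists\<close>)
  moreover have "distinct (V0_list n)"
    by (simp add: V0_list_def distinct_map distinct_sign_lists)
  ultimately show ?thesis
    by (simp add: V0_eq_image_V0_list[OF assms] sum.reindex sum_list_distinct_conv_sum_set)
qed

definition sign_by_position_sum :: "nat \<Rightarrow> int list \<Rightarrow> (nat \<Rightarrow> int) \<Rightarrow> int" where
  "sign_by_position_sum n f v = f ! ((\<Sum>i<n. if v i = 1 then i else 0) mod length f)"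

lemma sign_by_position_sum_in_set: "f \<noteq> [] \<Longrightarrow> sign_by_position_sum n f v \<in> set f"
  by (simp add: sign_by_position_sum_def)

lemma balancing_signs_by_position_sum:
  assumes "even n" "0 < n" "f \<noteq> []" "set f \<subseteq> {1, -1}"
    and balanced: "\<forall>i<n. (\<Sum>xs\<leftarrow>V0_list n. sign_by_position_sum n f (vec_of_list xs) * xs ! i) = 0"
  shows "\<exists>\<epsilon> :: (nat \<Rightarrow> int) \<Rightarrow> int.
           (\<forall>v\<in>V0 n. \<epsilon> v = 1 \<or> \<epsilon> v = -1) \<and>
           (\<forall>i<n. (\<Sum>v\<in>V0 n. \<epsilon> v * v i) = 0)"
proof (intro exI conjI ballI allI impI)
  fix v
  show "sign_by_position_sum n f v = 1 \<or> sign_by_position_sum n f v = -1"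
    using sign_by_position_sum_in_set[OF assms(3)] assms(4) by blast
next
  fix i assume "i < n"
  have "length xs = n" if "xs \<in> set (V0_list n)" for xs
    using that assms(2) by (auto simp: V0_list_def set_sign_lists)
  then have "(\<Sum>xs\<leftarrow>V0_list n. sign_by_position_sum n f (vec_of_list xs) * vec_of_list xs i)
      = (\<Sum>xs\<leftarrow>V0_list n. sign_by_position_sum n f (vec_of_list xs) * xs ! i)"
    using \<open>i < n\<close> by (intro arg_cong[where f = sum_list] map_cong) (auto simp: vec_of_list_def)
  then show "(\<Sum>v\<in>V0 n. sign_by_position_sum n f v * v i) = 0"
    using balanced \<open>i < n\<close> by (simp add: sum_V0_eq_sum_list[OF assms(1,2)])
qed

theorem lemmaA1:
  fixes n :: nat
  assumes "n \<in> {6, 10, 12}"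
  shows "\<exists>\<epsilon> :: (nat \<Rightarrow> int) \<Rightarrow> int.
           (\<forall>v\<in>V0 n. \<epsilon> v = 1 \<or> \<epsilon> v = -1) \<and>
           (\<forall>i<n. (\<Sum>v\<in>V0 n. \<epsilon> v * v i) = 0)"
proof -
  consider "n = 6" | "n = 10" | "n = 12"
    using assms by blast
  then show ?thesis
  proof cases
    case 1
    show ?thesis unfolding 1
      by (rule balancing_signs_by_position_sum[where f = "[1, 1, -1, -1, 1, -1]"]) code_simp+
  next
    case 2
    show ?thesis unfolding 2
      by (rule balancing_signs_by_position_sum[where f = "[1, 1, 1, -1, -1, -1, -1, 1, -1, 1]"])
        code_simp+
  next
    case 3
    show ?thesis unfolding 3
      by (rule balancing_signs_by_position_sum[where
            f = "[1, 1, 1, -1, 1, -1, -1, 1, -1, -1, 1, 1, 1, -1, 1, -1, -1, 1, -1, 1, -1, -1]"])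
        code_simp+
  qed
qed

end
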